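(* Let $k\ge1$, $A,B_1,\dots,B_k,C_1,\dots,C_k\in\mathbb{C}^{r\times r}$ with $AB_j=B_jA$, $B_jB_l=B_lB_j$, $C_jC_l=C_lC_j$ for all $j,l$, and $C_j+mI$ invertible for all $m\ge0$ and all $j$. Fix $i$ and $n\ge1$ and suppose $C_i-mI$ is invertible for all $0\le m\le n$. Then $$F_{\mathcal A}[C_i-nI]=F_{\mathcal A}+x_iAB_i\Big[\sum_{n_1=1}^nF_{\mathcal A}[A+I,\,B_i+I,\,C_i+(2-n_1)I]\,(C_i-n_1I)^{-1}(C_i-(n_1-1)I)^{-1}\Big].$$
   Context: For $M\in\mathbb{C}^{r\times r}$: $(M)_0=I$, $(M)_m=M(M+I)\cdots(M+(m-1)I)$, $(M)^{-1}_m=((M)_m)^{-1}$. $$F_{\mathcal A}=F_{\mathcal A}[A,B_1,\dots,B_k;C_1,\dots,C_k;x_1,\dots,x_k]=\sum_{m_1,\dots,m_k\ge0}(A)_{m_1+\cdots+m_k}\prod_{j=1}^k(B_j)_{m_j}\prod_{j=1}^k(C_j)^{-1}_{m_j}\prod_{j=1}^k\frac{x_j^{m_j}}{m_j!},$$ $x_j$ scalar variables, matrix products in order of increasing index; identities are of formal power series in the $x_j$. $F_{\mathcal A}[\dots]$ lists only the shifted parameters, all others unchanged. *)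

theory Defs
  imports "HOL-Analysis.Analysis"
begin

text \<open>Square complex matrices of size r are represented as complex^'r^'r
 (r = CARD('r) arbitrary). Scalar c times identity is mat c.\<close>

type_synonym 'r cmat = "complex^'r^'r"

fun mpoch :: "'r::finite cmat \<Rightarrow> nat \<Rightarrow> 'r cmat" where
  "mpoch M 0 = mat 1"
| "mpoch M (Suc m) = mpoch M m ** (M + mat (of_nat m))"

definition mprod_list :: "'r::finite cmat list \<Rightarrow> 'r cmat" where
  "mprod_list Ms = foldr (**) Ms (mat 1)"

text \<open>Coefficient of x_1^{m 1} ... x_k^{m k} in the Lauricella-type matrix series
  F_A[A,B_1..B_k;C_1..C_k;x_1..x_k]; indices run over 1..k.\<close>
definition FA_coef :: "nat \<Rightarrow> 'r::finite cmat \<Rightarrow> (nat \<Rightarrow> 'r cmat) \<Rightarrow> (nat \<Rightarrow> 'r cmat)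
    \<Rightarrow> (nat \<Rightarrow> nat) \<Rightarrow> 'r cmat" where
  "FA_coef k A B C m =
     (1 / (\<Prod>j=1..k. fact (m j) :: real)) *\<^sub>R
     (mpoch A (\<Sum>j=1..k. m j)
      ** mprod_list (map (\<lambda>j. mpoch (B j) (m j)) [1..<k+1])
      ** mprod_list (map (\<lambda>j. matrix_inv (mpoch (C j) (m j))) [1..<k+1]))"

definition multi_idx :: "nat \<Rightarrow> (nat \<Rightarrow> nat) \<Rightarrow> bool" where
  "multi_idx k m \<longleftrightarrow> (\<forall>j. j \<notin> {1..k} \<longrightarrow> m j = 0)"

end

theory Submission
  imports Defs
begin

text \<open>The coefficient of \<open>x^m\<close> in \<open>F_A\<close> involves \<open>C_i\<close> only through the factor
  \<open>(C_i)_(m_i)^-1\<close>. If all \<open>D + t I\<close> are invertible, then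
  \<open>(D)_p^-1 - (D+I)_p^-1 = p (D+2I)_(p-1)^-1 D^-1 (D+I)^-1\<close>, and the factor \<open>p\<close>, together with one
  factor \<open>A\<close> and one factor \<open>B_i\<close>, is absorbed by the factorials and Pochhammer symbols of the
  parameters \<open>A+I, B_i+I\<close> at the multi-index \<open>m - e_i\<close>. This is the contiguous relation
  \<open>F_A[C_i = D] - F_A[C_i = D+I] = x_i A B_i F_A[A+I, B_i+I, C_i = D+2I] D^-1 (D+I)^-1\<close>;
  summing it over \<open>D = C_i - n_1 I\<close>, \<open>n_1 = 1..n\<close>, telescopes to the theorem.\<close>

lemma matrix_add_rdistrib: "((A::'a::semiring_1^'n^'m) + B) ** C = A ** C + B ** C"
  by (vector matrix_matrix_mult_def sum.distrib[symmetric] field_simps)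

lemma matrix_diff_ldistrib: "(A::'a::ring_1^'n^'m) ** (B - C) = A ** B - A ** C"
  by (vector matrix_matrix_mult_def sum_subtractf[symmetric] field_simps)

lemma matrix_diff_rdistrib: "((A::'a::ring_1^'n^'m) - B) ** C = A ** C - B ** C"
  by (vector matrix_matrix_mult_def sum_subtractf[symmetric] field_simps)

lemma mat_add: "mat (a + b) = (mat a + mat b :: 'a::semiring_1^'n^'n)"
  by (vector mat_def)

lemma mat_diff: "mat (a - b) = (mat a - mat b :: 'a::ring_1^'n^'n)"
  by (vector mat_def)

lemma mat_mult_commute: "mat c ** (X::'a::comm_semiring_1^'n^'n) = X ** mat c"
  unfolding matrix_matrix_mult_def mat_def
  by (simp add: vec_eq_iff if_distrib if_distribR sum.delta'[OF finite] mult.commute cong: if_cong)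

lemma mat_of_nat_mult: "mat (of_nat p) ** (X::'a::real_algebra_1^'n^'m) = real p *\<^sub>R X"
  unfolding matrix_matrix_mult_def mat_def
  by (simp add: vec_eq_iff if_distrib if_distribR sum.delta'[OF finite] cong: if_cong)
     (simp add: scaleR_conv_of_real)

lemma matrix_mult_scaleR_left: "(k *\<^sub>R X) ** Y = k *\<^sub>R (X ** (Y::'a::real_algebra_1^'n^'m))"
  by (simp add: scalar_matrix_assoc)

lemma matrix_mult_scaleR_right: "X ** (k *\<^sub>R Y) = k *\<^sub>R (X ** (Y::'a::real_algebra_1^'n^'m))"
  by (simp add: matrix_scalar_ac scalar_matrix_assoc)

lemma matrix_sum_ldistrib: "(X::'a::semiring_1^'n^'m) ** sum f S = (\<Sum>s\<in>S. X ** f s)"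
  by (induction S rule: infinite_finite_induct) (auto simp: matrix_add_ldistrib)

lemma matrix_inv_right: "invertible (A::'a::semiring_1^'n^'n) \<Longrightarrow> A ** matrix_inv A = mat 1"
  unfolding invertible_def matrix_inv_def by (rule someI2_ex) auto

lemma matrix_inv_left: "invertible (A::'a::semiring_1^'n^'n) \<Longrightarrow> matrix_inv A ** A = mat 1"
  unfolding invertible_def matrix_inv_def by (rule someI2_ex) auto

lemma matrix_inv_unique:
  "invertible (A::'a::semiring_1^'n^'n) \<Longrightarrow> A ** X = mat 1 \<Longrightarrow> matrix_inv A = X"
  by (metis matrix_inv_left matrix_mul_assoc matrix_mul_lid matrix_mul_rid)

lemma matrix_inv_mult:
  fixes A B :: "'a::semiring_1^'n^'n"
  assumes "invertible A" "invertible B"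
  shows "matrix_inv (A ** B) = matrix_inv B ** matrix_inv A"
proof (rule matrix_inv_unique)
  have "A ** B ** (matrix_inv B ** matrix_inv A) = A ** (B ** matrix_inv B) ** matrix_inv A"
    by (simp add: matrix_mul_assoc)
  then show "A ** B ** (matrix_inv B ** matrix_inv A) = mat 1"
    using assms by (simp add: matrix_inv_right)
qed (use assms invertible_mult in blast)

definition commuting :: "'a::semiring_1^'n^'n \<Rightarrow> 'a^'n^'n \<Rightarrow> bool" where
  "commuting X Y \<longleftrightarrow> X ** Y = Y ** X"

lemma commuting_sym: "commuting X Y \<Longrightarrow> commuting Y X"
  unfolding commuting_def by simp

lemma commuting_refl: "commuting X X"
  unfolding commuting_def by simp

lemma commuting_mat: "commuting (X::'a::comm_semiring_1^'n^'n) (mat c)"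
  unfolding commuting_def by (simp add: mat_mult_commute)

lemma commuting_add: "commuting X Y \<Longrightarrow> commuting X Z \<Longrightarrow> commuting X (Y + Z)"
  unfolding commuting_def by (simp add: matrix_add_ldistrib matrix_add_rdistrib)

lemma commuting_mult: "commuting X Y \<Longrightarrow> commuting X Z \<Longrightarrow> commuting X (Y ** Z)"
  unfolding commuting_def by (metis matrix_mul_assoc)

lemma commuting_matrix_inv:
  assumes "commuting X Y" "invertible Y"
  shows "commuting X (matrix_inv Y)"
proof -
  have "matrix_inv Y ** X = matrix_inv Y ** X ** (Y ** matrix_inv Y)"
    using assms by (simp add: matrix_inv_right)
  also have "\<dots> = matrix_inv Y ** (X ** Y) ** matrix_inv Y"
    by (simp add: matrix_mul_assoc)
  also have "\<dots> = X ** matrix_inv Y"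
    using assms by (simp add: commuting_def matrix_mul_assoc matrix_inv_left)
  finally show ?thesis
    unfolding commuting_def by simp
qed

lemma commuting_matrix_inv_both:
  assumes "commuting X Y" "invertible X" "invertible Y"
  shows "commuting (matrix_inv X) (matrix_inv Y)"
  using assms by (meson commuting_matrix_inv commuting_sym)

lemma commuting_mprod_list: "(\<forall>Y\<in>set Ys. commuting X Y) \<Longrightarrow> commuting X (mprod_list Ys)"
  by (induction Ys) (auto simp: mprod_list_def commuting_mat commuting_mult)

lemma mprod_list_append: "mprod_list (Xs @ Ys) = mprod_list Xs ** (mprod_list Ys :: 'r::finite cmat)"
  by (induction Xs) (auto simp: mprod_list_def matrix_mul_assoc)

lemma mprod_list_Cons: "mprod_list (X # Xs) = X ** (mprod_list Xs :: 'r::finite cmat)"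
  by (simp add: mprod_list_def)

lemma mprod_list_split:
  assumes "i \<in> {1..k}"
  shows "mprod_list (map f [1..<k+1]) =
     mprod_list (map f [1..<i]) ** (f i :: 'r::finite cmat) ** mprod_list (map f [Suc i..<k+1])"
proof -
  have "[1..<k+1] = [1..<i] @ [i..<k+1]"
    using assms upt_add_eq_append[of 1 i "k + 1 - i"] by simp
  also have "[i..<k+1] = i # [Suc i..<k+1]"
    using assms by (simp add: upt_conv_Cons)
  finally show ?thesis
    by (simp only: mprod_list_append mprod_list_Cons map_append list.map matrix_mul_assoc)
qed

lemma commuting_mpoch: "commuting X Y \<Longrightarrow> commuting X (mpoch Y m)"
  by (induction m) (auto simp: commuting_mat commuting_mult commuting_add)

lemma mpoch_Suc_left: "mpoch X (Suc m) = X ** mpoch (X + mat 1) m"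
proof (induction m)
  case (Suc m)
  have "mpoch X (Suc (Suc m)) = X ** mpoch (X + mat 1) m ** (X + mat (of_nat (Suc m)))"
    using Suc by simp
  also have "X + mat (of_nat (Suc m)) = X + mat 1 + mat (of_nat m)"
    by (simp add: mat_add add.assoc)
  finally show ?case
    by (simp add: matrix_mul_assoc)
qed simp

lemma mat_Suc_shift: "X + mat 1 + mat (of_nat j) = X + mat (of_nat (Suc j))"
  by (simp add: mat_add ac_simps)

lemma invertible_mpoch:
  "(\<forall>j<m. invertible (X + mat (of_nat j))) \<Longrightarrow> invertible (mpoch X m)"
  by (induction m) (auto intro!: invertible_mult simp: less_Suc_eq invertible_def[of "mat 1"])

lemma matrix_inv_mpoch_diff:
  assumes inv: "\<forall>j. invertible (D + mat (of_nat j))"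
  shows "matrix_inv (mpoch D p) - matrix_inv (mpoch (D + mat 1) p)
       = real p *\<^sub>R matrix_inv (mpoch D (Suc p))"
proof -
  let ?P = "mpoch (D + mat 1) p" and ?L = "matrix_inv (mpoch D p) - matrix_inv (mpoch (D + mat 1) p)"
  have invP: "invertible (mpoch D p)" "invertible (mpoch D (Suc p))"
    using inv by (blast intro: invertible_mpoch)+
  have invP1: "invertible ?P"
    using inv by (intro invertible_mpoch) (simp only: mat_Suc_shift simp_thms)
  have "commuting D ?P"
    by (intro commuting_mpoch commuting_add commuting_refl commuting_mat)
  then have DP: "D ** ?P = ?P ** D"
    by (simp only: commuting_def)
  have "mpoch D (Suc p) = ?P ** D"
    by (simp only: mpoch_Suc_left DP)
  then have "?L ** mpoch D (Suc p) = matrix_inv (mpoch D p) ** (mpoch D p ** (D + mat (of_nat p)))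
       - matrix_inv ?P ** (?P ** D)"
    by (simp only: matrix_diff_rdistrib mpoch.simps(2))
  also have "\<dots> = mat (of_nat p)"
    using invP invP1 by (simp add: matrix_mul_assoc matrix_inv_left)
  finally have e: "?L ** mpoch D (Suc p) = mat (of_nat p)" .
  have "?L = ?L ** mpoch D (Suc p) ** matrix_inv (mpoch D (Suc p))"
    by (simp only: matrix_mul_assoc[symmetric] matrix_inv_right[OF invP(2)] matrix_mul_rid)
  also have "\<dots> = real p *\<^sub>R matrix_inv (mpoch D (Suc p))"
    by (simp only: e mat_of_nat_mult)
  finally show ?thesis .
qed

lemma matrix_inv_mpoch_Suc_Suc:
  assumes inv: "\<forall>j. invertible (D + mat (of_nat j))"
  shows "matrix_inv (mpoch D (Suc (Suc q))) =
     matrix_inv (mpoch (D + mat 2) q) ** matrix_inv (D + mat 1) ** matrix_inv D"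
proof -
  have D2: "D + mat 1 + mat 1 = D + mat 2"
    by (simp add: add.assoc mat_add[symmetric])
  have "invertible D" "invertible (D + mat 1)"
    using inv[rule_format, of 0] inv[rule_format, of 1] by simp_all
  moreover have "invertible (mpoch (D + mat 2) q)"
    using inv by (intro invertible_mpoch) (simp only: D2[symmetric] mat_Suc_shift simp_thms)
  moreover have "mpoch D (Suc (Suc q)) = D ** ((D + mat 1) ** mpoch (D + mat 2) q)"
    by (simp only: mpoch_Suc_left D2)
  ultimately show ?thesis
    by (simp only: matrix_inv_mult invertible_mult matrix_mul_assoc)
qed

lemma matrix_inv_mpoch_Suc_diff:
  assumes inv: "\<forall>j. invertible (D + mat (of_nat j))"
  shows "matrix_inv (mpoch D (Suc q)) - matrix_inv (mpoch (D + mat 1) (Suc q))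
       = real (Suc q) *\<^sub>R (matrix_inv (mpoch (D + mat 2) q) ** (matrix_inv D ** matrix_inv (D + mat 1)))"
proof -
  have "invertible D" "invertible (D + mat 1)"
    using inv[rule_format, of 0] inv[rule_format, of 1] by simp_all
  moreover have "commuting D (D + mat 1)"
    by (intro commuting_add commuting_refl commuting_mat)
  ultimately have "matrix_inv (D + mat 1) ** matrix_inv D = matrix_inv D ** matrix_inv (D + mat 1)"
    using commuting_matrix_inv_both unfolding commuting_def by metis
  then show ?thesis
    unfolding matrix_inv_mpoch_diff[OF inv] matrix_inv_mpoch_Suc_Suc[OF inv]
    by (simp only: matrix_mul_assoc[symmetric])
qed

definition mpoch_prod :: "(nat \<Rightarrow> 'r::finite cmat) \<Rightarrow> (nat \<Rightarrow> nat) \<Rightarrow> nat list \<Rightarrow> 'r cmat" where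
  "mpoch_prod B m js = mprod_list (map (\<lambda>j. mpoch (B j) (m j)) js)"

definition inv_mpoch_prod :: "(nat \<Rightarrow> 'r::finite cmat) \<Rightarrow> (nat \<Rightarrow> nat) \<Rightarrow> nat list \<Rightarrow> 'r cmat" where
  "inv_mpoch_prod C m js = mprod_list (map (\<lambda>j. matrix_inv (mpoch (C j) (m j))) js)"

lemma FA_coef_split:
  assumes "i \<in> {1..k}" "\<forall>j. j \<noteq> i \<longrightarrow> B' j = B j \<and> C' j = C j \<and> m' j = m j"
  shows "FA_coef k A B' C' m' = (1 / (\<Prod>j=1..k. fact (m' j) :: real)) *\<^sub>R
     (mpoch A (\<Sum>j=1..k. m' j) **
      (mpoch_prod B m [1..<i] ** mpoch (B' i) (m' i) ** mpoch_prod B m [Suc i..<k+1]) **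
      (inv_mpoch_prod C m [1..<i] ** matrix_inv (mpoch (C' i) (m' i)) ** inv_mpoch_prod C m [Suc i..<k+1]))"
proof -
  have "mpoch_prod B' m' [1..<i] = mpoch_prod B m [1..<i]"
    "mpoch_prod B' m' [Suc i..<k+1] = mpoch_prod B m [Suc i..<k+1]"
    "inv_mpoch_prod C' m' [1..<i] = inv_mpoch_prod C m [1..<i]"
    "inv_mpoch_prod C' m' [Suc i..<k+1] = inv_mpoch_prod C m [Suc i..<k+1]"
    unfolding mpoch_prod_def inv_mpoch_prod_def using assms(2)
    by (auto intro!: arg_cong[where f=mprod_list] map_cong)
  then show ?thesis
    unfolding FA_coef_def
    using mprod_list_split[OF assms(1), of "\<lambda>j. mpoch (B' j) (m' j)"]
      mprod_list_split[OF assms(1), of "\<lambda>j. matrix_inv (mpoch (C' j) (m' j))"]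
    by (simp add: mpoch_prod_def inv_mpoch_prod_def)
qed

lemma FA_coef_upd_C_zero:
  assumes "m i = 0"
  shows "FA_coef k A B (C(i := X)) m = FA_coef k A B C m"
proof -
  have "map (\<lambda>j. matrix_inv (mpoch ((C(i := X)) j) (m j))) js
      = map (\<lambda>j. matrix_inv (mpoch (C j) (m j))) js" for js
    using assms by (intro map_cong) auto
  then show ?thesis
    unfolding FA_coef_def by (simp only:)
qed

lemma sum_fun_upd_Suc:
  assumes "finite I" "i \<in> I" "m i = Suc q"
  shows "sum m I = Suc (sum (m(i := q)) I)"
  using assms sum.remove[OF assms(1,2), of m] sum.remove[OF assms(1,2), of "m(i := q)"] by simp

lemma prod_fact_fun_upd_Suc:
  assumes "finite I" "i \<in> I" "m i = Suc q"
  shows "(\<Prod>j\<in>I. fact (m j) :: real) = real (Suc q) * (\<Prod>j\<in>I. fact ((m(i := q)) j))"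
  using assms prod.remove[OF assms(1,2), of "\<lambda>j. fact (m j) :: real"]
    prod.remove[OF assms(1,2), of "\<lambda>j. fact ((m(i := q)) j) :: real"]
  by (simp add: fact_Suc)

lemma mpoch_Suc_absorb:
  assumes "commuting B A" "commuting B L"
  shows "A ** B ** mpoch (A + mat 1) s ** (L ** mpoch (B + mat 1) q ** R)
       = mpoch A (Suc s) ** (L ** mpoch B (Suc q) ** R)"
proof -
  have "commuting B (mpoch (A + mat 1) s)"
    using assms(1) by (intro commuting_mpoch commuting_add commuting_mat)
  with assms(2) have "A ** B ** mpoch (A + mat 1) s ** (L ** mpoch (B + mat 1) q ** R)
      = A ** mpoch (A + mat 1) s ** (L ** (B ** mpoch (B + mat 1) q) ** R)"
    unfolding commuting_def by (simp add: matrix_mul_assoc) (simp add: matrix_mul_assoc[symmetric])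
  then show ?thesis
    by (simp only: mpoch_Suc_left)
qed

lemma commuting_inv_mpoch_prod:
  assumes "invertible X" "\<forall>j\<in>set js. commuting X (C j) \<and> invertible (mpoch (C j) (m j))"
  shows "commuting (inv_mpoch_prod C m js) (matrix_inv X)"
  unfolding inv_mpoch_prod_def using assms
  by (intro commuting_sym[OF commuting_mprod_list]) (auto intro: commuting_matrix_inv_both commuting_mpoch)

lemma FA_coef_contiguous_C:
  fixes A D :: "'r::finite cmat" and B C :: "nat \<Rightarrow> 'r cmat"
  assumes i: "i \<in> {1..k}" and mi: "1 \<le> m i"
    and AB: "A ** B i = B i ** A"
    and BB: "\<forall>j\<in>{1..k}. j \<noteq> i \<longrightarrow> B i ** B j = B j ** B i"
    and DC: "\<forall>j\<in>{1..k}. j \<noteq> i \<longrightarrow> D ** C j = C j ** D"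
    and invC: "\<forall>j\<in>{1..k}. j \<noteq> i \<longrightarrow> invertible (mpoch (C j) (m j))"
    and invD: "\<forall>t. invertible (D + mat (of_nat t))"
  shows "FA_coef k A B (C(i := D)) m - FA_coef k A B (C(i := D + mat 1)) m =
    (A ** B i) ** (FA_coef k (A + mat 1) (B(i := B i + mat 1)) (C(i := D + mat 2)) (m(i := m i - 1))
      ** matrix_inv D ** matrix_inv (D + mat 1))"
proof -
  obtain q where q: "m i = Suc q"
    using mi by (cases "m i") auto
  define m' where "m' = m(i := q)"
  define S where "S = (\<Sum>j=1..k. m' j)"
  define c where "c = 1 / (\<Prod>j=1..k. fact (m j) :: real)"
  define LB where "LB = mpoch_prod B m [1..<i]"
  define RB where "RB = mpoch_prod B m [Suc i..<k+1]"
  define LC where "LC = inv_mpoch_prod C m [1..<i]"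
  define RC where "RC = inv_mpoch_prod C m [Suc i..<k+1]"
  define W where "W = matrix_inv D ** matrix_inv (D + mat 1)"
  have S: "(\<Sum>j=1..k. m j) = Suc S"
    unfolding S_def m'_def using i q by (intro sum_fun_upd_Suc) auto
  have c: "1 / (\<Prod>j=1..k. fact (m' j) :: real) = real (Suc q) * c"
    using prod_fact_fun_upd_Suc[of "{1..k}" i m q] i q unfolding c_def m'_def by simp
  have coef: "FA_coef k A B (C(i := X)) m
      = c *\<^sub>R (mpoch A (Suc S) ** (LB ** mpoch (B i) (Suc q) ** RB) **
          (LC ** matrix_inv (mpoch X (Suc q)) ** RC))" for X
    using FA_coef_split[OF i, of B B "C(i := X)" C m m A] q
    unfolding c_def S LB_def RB_def LC_def RC_def by simp
  have coef_shifted: "FA_coef k (A + mat 1) (B(i := B i + mat 1)) (C(i := D + mat 2)) m'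
      = (real (Suc q) * c) *\<^sub>R (mpoch (A + mat 1) S ** (LB ** mpoch (B i + mat 1) q ** RB) **
          (LC ** matrix_inv (mpoch (D + mat 2) q) ** RC))"
    using FA_coef_split[OF i, of "B(i := B i + mat 1)" B "C(i := D + mat 2)" C m' m "A + mat 1"]
    unfolding c S_def LB_def RB_def LC_def RC_def by (simp add: m'_def)
  have "commuting (B i) LB"
  proof -
    have "commuting (B i) (B j)" if "j \<in> set [1..<i]" for j
      using BB i that by (simp add: commuting_def)
    then show ?thesis
      unfolding LB_def mpoch_prod_def by (auto intro!: commuting_mprod_list commuting_mpoch)
  qed
  then have absorb_AB: "A ** B i ** mpoch (A + mat 1) S ** (LB ** mpoch (B i + mat 1) q ** RB)
      = mpoch A (Suc S) ** (LB ** mpoch (B i) (Suc q) ** RB)"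
    using AB by (intro mpoch_Suc_absorb) (simp_all add: commuting_def)
  have "invertible D" "invertible (D + mat 1)"
    using invD[rule_format, of 0] invD[rule_format, of 1] by simp_all
  moreover have "commuting D (C j)" "commuting (D + mat 1) (C j)" "invertible (mpoch (C j) (m j))"
    if "j \<in> set [Suc i..<k+1]" for j
  proof -
    have j: "j \<in> {1..k}" "j \<noteq> i"
      using i that by auto
    then show "commuting D (C j)"
      using DC by (simp add: commuting_def)
    then show "commuting (D + mat 1) (C j)"
      using commuting_sym commuting_add commuting_mat by metis
    show "invertible (mpoch (C j) (m j))"
      using invC j by simp
  qed
  ultimately have "commuting RC (matrix_inv D)" "commuting RC (matrix_inv (D + mat 1))"
    unfolding RC_def by (blast intro: commuting_inv_mpoch_prod)+
  then have commute_W: "W ** RC = RC ** W"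
    unfolding W_def using commuting_mult commuting_def by metis
  have "FA_coef k A B (C(i := D)) m - FA_coef k A B (C(i := D + mat 1)) m
      = c *\<^sub>R (mpoch A (Suc S) ** (LB ** mpoch (B i) (Suc q) ** RB) **
          (LC ** (matrix_inv (mpoch D (Suc q)) - matrix_inv (mpoch (D + mat 1) (Suc q))) ** RC))"
    unfolding coef by (simp only: matrix_diff_ldistrib matrix_diff_rdistrib scaleR_diff_right)
  also have "\<dots> = (real (Suc q) * c) *\<^sub>R (mpoch A (Suc S) ** (LB ** mpoch (B i) (Suc q) ** RB) **
          (LC ** matrix_inv (mpoch (D + mat 2) q) ** (W ** RC)))"
    unfolding matrix_inv_mpoch_Suc_diff[OF invD] W_def[symmetric]
    by (simp only: matrix_mult_scaleR_left matrix_mult_scaleR_right scaleR_scaleR matrix_mul_assoc mult.commute)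
  also have "\<dots> = (A ** B i) ** (FA_coef k (A + mat 1) (B(i := B i + mat 1)) (C(i := D + mat 2)) m'
      ** matrix_inv D ** matrix_inv (D + mat 1))"
    unfolding coef_shifted absorb_AB[symmetric] commute_W unfolding W_def
    by (simp only: matrix_mult_scaleR_left matrix_mult_scaleR_right matrix_mul_assoc)
  finally show ?thesis
    by (simp add: m'_def q)
qed

lemma invertible_shift_down:
  fixes X :: "'r::finite cmat"
  assumes "\<forall>t::nat. invertible (X + mat (of_nat t))"
    and "\<forall>t::nat. t \<le> n \<longrightarrow> invertible (X - mat (of_nat t))" and "s \<le> n"
  shows "invertible (X - mat (of_nat s) + mat (of_nat t))"
proof (cases "s \<le> t")
  case True
  then have "X - mat (of_nat s) + mat (of_nat t) = X + mat (of_nat (t - s))"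
    by (simp add: of_nat_diff mat_diff algebra_simps)
  then show ?thesis
    using assms(1)[rule_format, of "t - s"] by (simp only:)
next
  case False
  then have "X - mat (of_nat s) + mat (of_nat t) = X - mat (of_nat (s - t))"
    by (simp add: of_nat_diff mat_diff algebra_simps)
  moreover have "s - t \<le> n"
    using assms(3) by auto
  ultimately show ?thesis
    using assms(2)[rule_format, of "s - t"] by (simp only: simp_thms)
qed

lemma FA_coef_C_shift_down:
  fixes A :: "'r::finite cmat" and B C :: "nat \<Rightarrow> 'r cmat"
  assumes i: "i \<in> {1..k}" and mi: "1 \<le> m i"
    and AB: "A ** B i = B i ** A"
    and BB: "\<forall>j\<in>{1..k}. B i ** B j = B j ** B i"
    and CC: "\<forall>j\<in>{1..k}. C i ** C j = C j ** C i"
    and invC: "\<forall>j\<in>{1..k}. \<forall>t::nat. invertible (C j + mat (of_nat t))"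
    and invCi: "\<forall>t::nat. t \<le> n \<longrightarrow> invertible (C i - mat (of_nat t))"
  shows "FA_coef k A B (C(i := C i - mat (of_nat n))) m = FA_coef k A B C m
    + (A ** B i) **
      (\<Sum>n1=1..n. FA_coef k (A + mat 1) (B(i := B i + mat 1)) (C(i := C i + mat (2 - of_nat n1)))
                     (m(i := m i - 1))
                   ** matrix_inv (C i - mat (of_nat n1)) ** matrix_inv (C i - mat (of_nat (n1 - 1))))"
proof -
  define T where "T s = FA_coef k A B (C(i := C i - mat (of_nat s))) m" for s
  have step: "T n1 - T (n1 - 1) = (A ** B i) **
      (FA_coef k (A + mat 1) (B(i := B i + mat 1)) (C(i := C i + mat (2 - of_nat n1))) (m(i := m i - 1))
       ** matrix_inv (C i - mat (of_nat n1)) ** matrix_inv (C i - mat (of_nat (n1 - 1))))"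
    if n1: "n1 \<in> {1..n}" for n1
  proof -
    define D where "D = C i - mat (of_nat n1)"
    have D1: "D + mat 1 = C i - mat (of_nat (n1 - 1))"
      using n1 unfolding D_def by (simp add: of_nat_diff mat_diff algebra_simps)
    have D2: "D + mat 2 = C i + mat (2 - of_nat n1)"
      unfolding D_def by (simp add: mat_diff algebra_simps)
    have invD: "\<forall>t. invertible (D + mat (of_nat t))"
      using invertible_shift_down[of "C i" n n1] invC invCi i n1 unfolding D_def by simp
    have "\<forall>j\<in>{1..k}. j \<noteq> i \<longrightarrow> D ** C j = C j ** D"
      using CC unfolding D_def by (simp add: matrix_diff_ldistrib matrix_diff_rdistrib mat_mult_commute)
    moreover have "\<forall>j\<in>{1..k}. j \<noteq> i \<longrightarrow> invertible (mpoch (C j) (m j))"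
      using invC by (blast intro: invertible_mpoch)
    ultimately have "T n1 - T (n1 - 1) = (A ** B i) ** (FA_coef k (A + mat 1) (B(i := B i + mat 1))
        (C(i := D + mat 2)) (m(i := m i - 1)) ** matrix_inv D ** matrix_inv (D + mat 1))"
      using FA_coef_contiguous_C[where D = D and m = m and B = B and C = C and A = A, OF i mi AB _ _ _ invD] BB
      unfolding T_def D1[symmetric] D_def[symmetric] by blast
    then show ?thesis
      unfolding D1 D2 unfolding D_def .
  qed
  have telescope: "(\<Sum>n1=1..N. T n1 - T (n1 - 1)) = T N - T 0" for N
    by (induction N) (auto simp: sum.cl_ivl_Suc)
  have "(A ** B i) **
      (\<Sum>n1=1..n. FA_coef k (A + mat 1) (B(i := B i + mat 1)) (C(i := C i + mat (2 - of_nat n1)))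
                     (m(i := m i - 1))
                   ** matrix_inv (C i - mat (of_nat n1)) ** matrix_inv (C i - mat (of_nat (n1 - 1))))
      = (\<Sum>n1=1..n. T n1 - T (n1 - 1))"
    unfolding matrix_sum_ldistrib by (intro sum.cong refl step[symmetric])
  also have "\<dots> = T n - T 0"
    by (rule telescope)
  finally show ?thesis
    unfolding T_def by simp
qed

theorem mainTheorem4:
  fixes k i n :: nat
    and A :: "'r::finite cmat"
    and B C :: "nat \<Rightarrow> 'r cmat"
  assumes "k \<ge> 1"
    and "\<forall>j\<in>{1..k}. A ** B j = B j ** A"
    and "\<forall>j\<in>{1..k}. \<forall>l\<in>{1..k}. B j ** B l = B l ** B j"
    and "\<forall>j\<in>{1..k}. \<forall>l\<in>{1..k}. C j ** C l = C l ** C j"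
    and "\<forall>j\<in>{1..k}. \<forall>m::nat. invertible (C j + mat (of_nat m))"
    and "i \<in> {1..k}" and "n \<ge> 1"
    and "\<forall>m::nat. m \<le> n \<longrightarrow> invertible (C i - mat (of_nat m))"
  shows "\<forall>m. multi_idx k m \<longrightarrow>
    FA_coef k A B (C(i := C i - mat (of_nat n))) m =
      FA_coef k A B C m
      + (if m i \<ge> 1 then
           (A ** B i) **
           (\<Sum>n1=1..n. FA_coef k (A + mat 1) (B(i := B i + mat 1))
                              (C(i := C i + mat (2 - of_nat n1))) (m(i := m i - 1))
                        ** matrix_inv (C i - mat (of_nat n1))
                        ** matrix_inv (C i - mat (of_nat (n1 - 1))))
         else 0)"
proof -
  \<comment> \<open>\<open>FA_coef k\<close> only reads \<open>m\<close> on \<open>{1..k}\<close> and the sum is empty for \<open>n = 0\<close>.\<close>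
  have "A ** B i = B i ** A" "\<forall>j\<in>{1..k}. B i ** B j = B j ** B i"
    "\<forall>j\<in>{1..k}. C i ** C j = C j ** C i"
    using assms(2-4,6) by simp_all
  with FA_coef_C_shift_down[OF assms(6) _ this assms(5,8)] show ?thesis
    using FA_coef_upd_C_zero[of _ i k A B C] by auto
qed

end
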